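(* In the affine setting described in the context, let $\eta,\eta'\in A$ and let $\psi\in\mathcal{L}^2(\hat{Q},\nu_Q)$. Then the function $$\psi'(\phi):=\psi\big(\phi+q(\eta'-\eta)\big)\,\beta_{\eta,\eta'}(\phi),\qquad\phi\in\hat{Q},$$ is well defined as a function on $\hat{Q}$ and belongs to $\mathcal{L}^2(\hat{Q},\nu_Q)$. Moreover, the map $\mathcal{L}^2(\hat{Q},\nu_Q)\to\mathcal{L}^2(\hat{Q},\nu_Q)$, $\psi\mapsto\psi'$, is an isometric isomorphism.
   Context: $A$ is a real affine space over the vector space $L$. $\theta:A\times L\to\mathbb{R}$ is linear in the second argument and there is a bilinear $[\cdot,\cdot]:L\times L\to\mathbb{R}$ with $\theta(\eta+\xi,\tau)=\theta(\eta,\tau)+[\xi,\tau]$; $\omega(\xi,\xi')=\frac12[\xi,\xi']-\frac12[\xi',\xi]$ is non-degenerate. $M=\{\tau:[\xi,\tau]=0\ \forall\xi\in L\}$, $N=\{\tau:[\tau,\xi]=0\ \forall\xi\in L\}$, $L=M\oplus N$ assumed, $Q=L/M$ with quotient map $q$; $[\cdot,\cdot]$ descends to $L\times Q\to\mathbb{R}$. $\Omega:Q\times Q\to\mathbb{C}$ is symmetric bilinear with positive definite real part and admissible: $Q$ with inner product $\Re\Omega$ is a separable real Hilbert space, $\Im\Omega$ is continuous, each $\phi\mapsto[\xi,\phi]$ ($\xi\in L$) is continuous on $Q$, and every continuous linear functional on $Q$ has this form. $\hat{Q}$ is the algebraic dual of the topological dual $Q^*$, containing $Q$ canonically, with the initial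 topology of the evaluations at elements of $Q^*$; $\nu_Q$ is the Gaussian probability measure on $\hat{Q}$ with $\int\exp(\mathrm{i}x(\ell))\,\mathrm{d}\nu_Q(x)=\exp(-\frac14\|\ell\|^2)$ for $\ell\in Q^*$. $\mathcal{L}^2(\hat{Q},\nu_Q)$ denotes the (semi-normed) space of square-integrable functions. For $\eta,\eta'\in A$, $\beta_{\eta,\eta'}$ is the continuous function on $Q$ $$\beta_{\eta,\eta'}(\phi)=\exp\Big(\mathrm{i}\theta(\eta,\eta'-\eta)-\tfrac12\Omega(q(\eta'-\eta),q(\eta'-\eta))-\mathrm{i}[\eta'-\eta,\phi]-\Omega(q(\eta'-\eta),\phi)\Big),$$ which depends on $\phi$ only through continuous linear functionals and hence extends canonically to a continuous function on $\hat{Q}$ (a continuous function on $Q$ invariant under translations by a closed finite-codimension subspace $W$ factors through $Q/W$, which is also a quotient of $\hat{Q}$). *)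

theory Defs
  imports "HOL-Probability.Probability"
begin

text \<open>Affine space A (type 'a) over the real vector space L (type 'l):
  add eta xi is eta + xi, diff eta' eta is eta' - eta.\<close>
definition torsor :: "('a \<Rightarrow> 'l::real_vector \<Rightarrow> 'a) \<Rightarrow> ('a \<Rightarrow> 'a \<Rightarrow> 'l) \<Rightarrow> bool" where
  "torsor add diff \<longleftrightarrow>
     (\<forall>\<eta>. add \<eta> 0 = \<eta>) \<and>
     (\<forall>\<eta> \<xi> \<xi>'. add (add \<eta> \<xi>) \<xi>' = add \<eta> (\<xi> + \<xi>')) \<and>
     (\<forall>\<eta> \<eta>'. add \<eta> (diff \<eta>' \<eta>) = \<eta>') \<and>
     (\<forall>\<eta> \<xi>. diff (add \<eta> \<xi>) \<eta> = \<xi>)"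

definition omega :: "('l \<Rightarrow> 'l \<Rightarrow> real) \<Rightarrow> 'l \<Rightarrow> 'l \<Rightarrow> real" where
  "omega br \<xi> \<xi>' = br \<xi> \<xi>' / 2 - br \<xi>' \<xi> / 2"

definition Mset :: "('l \<Rightarrow> 'l \<Rightarrow> real) \<Rightarrow> 'l set" where
  "Mset br = {\<tau>. \<forall>\<xi>. br \<xi> \<tau> = 0}"

definition Nset :: "('l \<Rightarrow> 'l \<Rightarrow> real) \<Rightarrow> 'l set" where
  "Nset br = {\<tau>. \<forall>\<xi>. br \<tau> \<xi> = 0}"

text \<open>Q = L/M is represented by a real vector space 'q with a surjective linear map q
  whose kernel is exactly M (quotient up to canonical isomorphism).\<close>
definition quotient_map :: "('l::real_vector \<Rightarrow> 'q::real_vector) \<Rightarrow> 'l set \<Rightarrow> bool" where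
  "quotient_map q M \<longleftrightarrow> linear q \<and> surj q \<and> (\<forall>\<tau>. q \<tau> = 0 \<longleftrightarrow> \<tau> \<in> M)"

text \<open>The bracket descended to L x Q: [xi, q tau] = [xi, tau].\<close>
definition brQ :: "('l \<Rightarrow> 'l \<Rightarrow> real) \<Rightarrow> ('l \<Rightarrow> 'q) \<Rightarrow> 'l \<Rightarrow> 'q \<Rightarrow> real" where
  "brQ br q \<xi> \<phi> = br \<xi> (SOME \<tau>. q \<tau> = \<phi>)"

text \<open>Admissibility of Omega. The Hilbert structure on Q is the type class structure
  of 'q (real_inner + complete_space), whose inner product is required to be Re Omega.\<close>
definition admissible :: "('l \<Rightarrow> 'l \<Rightarrow> real) \<Rightarrow> ('l \<Rightarrow> 'q::real_inner) \<Rightarrow> ('q \<Rightarrow> 'q \<Rightarrow> complex) \<Rightarrow> bool" where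
  "admissible br q \<Omega> \<longleftrightarrow>
     (\<forall>x y. inner x y = Re (\<Omega> x y)) \<and>
     (\<exists>D::'q set. countable D \<and> closure D = UNIV) \<and>
     continuous_on UNIV (\<lambda>(x, y). Im (\<Omega> x y)) \<and>
     (\<forall>\<xi>. continuous_on UNIV (brQ br q \<xi>)) \<and>
     (\<forall>l::'q \<Rightarrow> real. linear l \<and> continuous_on UNIV l \<longrightarrow> (\<exists>\<xi>. l = brQ br q \<xi>))"

definition Qstar :: "('q::real_normed_vector \<Rightarrow> real) set" where
  "Qstar = {l. linear l \<and> continuous_on UNIV l}"

definition Qhat :: "(('q::real_normed_vector \<Rightarrow> real) \<Rightarrow> real) set" where
  "Qhat = {x \<in> extensional Qstar.
      (\<forall>l1\<in>Qstar. \<forall>l2\<in>Qstar. x (\<lambda>\<phi>. l1 \<phi> + l2 \<phi>) = x l1 + x l2) \<and>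
      (\<forall>c. \<forall>l\<in>Qstar. x (\<lambda>\<phi>. c * l \<phi>) = c * x l)}"

definition embQ :: "'q::real_normed_vector \<Rightarrow> (('q \<Rightarrow> real) \<Rightarrow> real)" where
  "embQ \<phi> = restrict (\<lambda>l. l \<phi>) Qstar"

definition hat_shift :: "'q::real_normed_vector \<Rightarrow> (('q \<Rightarrow> real) \<Rightarrow> real) \<Rightarrow> (('q \<Rightarrow> real) \<Rightarrow> real)" where
  "hat_shift c x = restrict (\<lambda>l. x l + l c) Qstar"

definition gaussian_Qhat :: "(('q::real_normed_vector \<Rightarrow> real) \<Rightarrow> real) measure \<Rightarrow> bool" where
  "gaussian_Qhat nu \<longleftrightarrow> prob_space nu \<and> space nu = Qhat \<and>
     sets nu = sets (restrict_space (Pi\<^sub>M Qstar (\<lambda>_. borel)) Qhat) \<and>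
     (\<forall>l\<in>Qstar. (\<integral>x. exp (\<i> * complex_of_real (x l)) \<partial>nu)
                 = complex_of_real (exp (- (onorm l)\<^sup>2 / 4)))"

definition L2 :: "'b measure \<Rightarrow> ('b \<Rightarrow> complex) set" where
  "L2 nu = {\<psi>. \<psi> \<in> borel_measurable nu \<and> integrable nu (\<lambda>x. (cmod (\<psi> x))\<^sup>2)}"

definition L2norm :: "'b measure \<Rightarrow> ('b \<Rightarrow> complex) \<Rightarrow> real" where
  "L2norm nu \<psi> = sqrt (\<integral>x. (cmod (\<psi> x))\<^sup>2 \<partial>nu)"

text \<open>beta_{eta,eta'} on Q, and its canonical extension to Q-hat (obtained by replacing
  each continuous linear functional l(phi) by x(l)).\<close>
definition beta :: "('a \<Rightarrow> 'l \<Rightarrow> real) \<Rightarrow> ('l \<Rightarrow> 'l \<Rightarrow> real) \<Rightarrow> ('l \<Rightarrow> 'q) \<Rightarrow> ('q \<Rightarrow> 'q \<Rightarrow> complex)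
     \<Rightarrow> ('a \<Rightarrow> 'a \<Rightarrow> 'l) \<Rightarrow> 'a \<Rightarrow> 'a \<Rightarrow> 'q \<Rightarrow> complex" where
  "beta \<theta> br q \<Omega> diff \<eta> \<eta>' \<phi> =
     exp (\<i> * complex_of_real (\<theta> \<eta> (diff \<eta>' \<eta>))
          - \<Omega> (q (diff \<eta>' \<eta>)) (q (diff \<eta>' \<eta>)) / 2
          - \<i> * complex_of_real (brQ br q (diff \<eta>' \<eta>) \<phi>)
          - \<Omega> (q (diff \<eta>' \<eta>)) \<phi>)"

definition beta_hat :: "('a \<Rightarrow> 'l \<Rightarrow> real) \<Rightarrow> ('l \<Rightarrow> 'l \<Rightarrow> real) \<Rightarrow> ('l \<Rightarrow> 'q) \<Rightarrow> ('q \<Rightarrow> 'q \<Rightarrow> complex)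
     \<Rightarrow> ('a \<Rightarrow> 'a \<Rightarrow> 'l) \<Rightarrow> 'a \<Rightarrow> 'a \<Rightarrow> (('q \<Rightarrow> real) \<Rightarrow> real) \<Rightarrow> complex" where
  "beta_hat \<theta> br q \<Omega> diff \<eta> \<eta>' x =
     exp (\<i> * complex_of_real (\<theta> \<eta> (diff \<eta>' \<eta>))
          - \<Omega> (q (diff \<eta>' \<eta>)) (q (diff \<eta>' \<eta>)) / 2
          - \<i> * complex_of_real (x (brQ br q (diff \<eta>' \<eta>)))
          - (complex_of_real (x (\<lambda>\<phi>. Re (\<Omega> (q (diff \<eta>' \<eta>)) \<phi>)))
             + \<i> * complex_of_real (x (\<lambda>\<phi>. Im (\<Omega> (q (diff \<eta>' \<eta>)) \<phi>)))))"

definition transf :: "('a \<Rightarrow> 'l \<Rightarrow> real) \<Rightarrow> ('l \<Rightarrow> 'l \<Rightarrow> real) \<Rightarrow> ('l \<Rightarrow> 'q::real_normed_vector)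
     \<Rightarrow> ('q \<Rightarrow> 'q \<Rightarrow> complex) \<Rightarrow> ('a \<Rightarrow> 'a \<Rightarrow> 'l) \<Rightarrow> 'a \<Rightarrow> 'a
     \<Rightarrow> ((('q \<Rightarrow> real) \<Rightarrow> real) \<Rightarrow> complex) \<Rightarrow> ((('q \<Rightarrow> real) \<Rightarrow> real) \<Rightarrow> complex)" where
  "transf \<theta> br q \<Omega> diff \<eta> \<eta>' \<psi> =
     (\<lambda>x. \<psi> (hat_shift (q (diff \<eta>' \<eta>)) x) * beta_hat \<theta> br q \<Omega> diff \<eta> \<eta>' x)"

end

(* Write v = q (eta' - eta) and tau_v for the translation of Q-hat by v, so that
   psi' = (psi o tau_v) * beta.  Because Re Omega is the inner product of Q, |beta|^2 is the
   Cameron--Martin density exp (- |v|^2 - 2 x<v, _>) of the translated Gaussian measure: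
   integral f d nu = integral |beta|^2 (f o tau_v) d nu for every f >= 0.  Hence psi |-> psi' is
   isometric, and it is onto because tau_v is invertible and beta never vanishes.

   The Cameron--Martin identity is checked on characteristic functionals.  Splitting a functional L
   along the unit vector u = v / |v| into K + c <u, _> with K u = 0, the evaluations x K and x <u, _>
   are independent centred Gaussians, so the integral factors into the characteristic function of
   x K and an explicit one-dimensional Gaussian integral.  Characteristic functionals determine
   finite measures on Q-hat: on a cylinder over finitely many coordinates this follows from Levy's
   uniqueness theorem by induction on the number of coordinates. *)

theory Submission
  imports Defs
begin

section \<open>Finite measures with equal characteristic functions\<close>

lemma finite_measure_eq_if_char_eq:
  fixes M1 M2 :: "real measure"
  assumes "finite_measure M1" "finite_measure M2"
    and sets: "sets M1 = sets borel" "sets M2 = sets borel"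
    and char: "\<And>t. (\<integral>x. iexp (t * x) \<partial>M1) = (\<integral>x. iexp (t * x) \<partial>M2)"
  shows "M1 = M2"
proof -
  interpret M1: finite_measure M1 by fact
  interpret M2: finite_measure M2 by fact
  have space: "space M1 = UNIV" "space M2 = UNIV"
    using sets_eq_imp_space_eq[OF sets(1)] sets_eq_imp_space_eq[OF sets(2)] by auto
  define a where "a = measure M1 UNIV"
  have total: "measure M2 UNIV = a"
    using char[of 0] space by (simp add: a_def)
  show ?thesis
  proof (cases "a = 0")
    case True
    have "emeasure M1 A \<le> emeasure M1 (space M1)" "emeasure M2 A \<le> emeasure M2 (space M2)" for A
      by (rule emeasure_space)+
    then have "emeasure M1 A = 0" "emeasure M2 A = 0" for A
      using True total space by (auto simp: a_def M1.emeasure_eq_measure M2.emeasure_eq_measure intro: antisym)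
    then show ?thesis
      using sets by (intro measure_eqI) auto
  next
    case False
    then have a_pos: "a > 0" by (simp add: a_def order_less_le)
    define N where "N M = density M (\<lambda>_. ennreal (1 / a))" for M :: "real measure"
    have emeasure_N: "emeasure (N M) A = ennreal (1 / a) * emeasure M A" if "A \<in> sets M" for M A
      unfolding N_def using that by (rule emeasure_density_const)
    have distribution: "real_distribution (N M)"
      if "finite_measure M" "sets M = sets borel" "measure M UNIV = a" for M
    proof -
      interpret finite_measure M by fact
      have "UNIV \<in> sets M" using that(2) by simp
      then show ?thesis
        using that a_pos emeasure_N[of UNIV M] sets_eq_imp_space_eq[OF that(2)]
        by (auto simp: real_distribution_def real_distribution_axioms_def N_def emeasure_eq_measure
            ennreal_mult[symmetric] intro!: prob_spaceI)
    qed
    have char_N: "char (N M) t = (1 / a) *\<^sub>R (\<integral>x. iexp (t * x) \<partial>M)" if "sets M = sets borel" for M t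
      unfolding char_def N_def using a_pos that by (subst integral_density) auto
    have "N M1 = N M2"
      using assms a_pos total
      by (intro Levy_uniqueness distribution ext) (auto simp: a_def char_N)
    then have "ennreal (1 / a) * emeasure M1 A = ennreal (1 / a) * emeasure M2 A" if "A \<in> sets M1" for A
      using that sets emeasure_N by metis
    then show ?thesis
      using sets a_pos by (intro measure_eqI) (auto simp: ennreal_mult_cancel_left)
  qed
qed

lemma finite_measure_density_bounded:
  assumes "finite_measure M" "w \<in> borel_measurable M" "\<And>x. w x \<le> C"
  shows "finite_measure (density M (\<lambda>x. ennreal (w x)))"
proof -
  interpret finite_measure M by fact
  have "emeasure (density M (\<lambda>x. ennreal (w x))) (space M) = (\<integral>\<^sup>+x. ennreal (w x) \<partial>M)"
    using assms(2) by (simp add: emeasure_density nn_integral_set_ennreal[symmetric])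
  also have "\<dots> \<le> (\<integral>\<^sup>+x. ennreal C \<partial>M)"
    using assms(3) by (intro nn_integral_mono) (simp add: ennreal_leI)
  also have "\<dots> < \<infinity>" by (simp add: emeasure_eq_measure ennreal_mult_less_top)
  finally show ?thesis by (intro finite_measureI) simp
qed

text \<open>The weighted push-forwards of \<open>m1\<close> and \<open>m2\<close> under \<open>g\<close> are finite measures on the line
  with the same characteristic function, hence equal.\<close>
lemma integral_weighted_indicator_eq_if_char_eq:
  fixes g w :: "'x \<Rightarrow> real"
  assumes "finite_measure m1" "finite_measure m2" and sets: "sets m1 = sets m2"
    and [measurable]: "g \<in> borel_measurable m1" "w \<in> borel_measurable m1"
    and w_nonneg: "\<And>x. 0 \<le> w x" and w_bound: "\<And>x. w x \<le> C"
    and char: "\<And>t. (\<integral>x. w x *\<^sub>R iexp (t * g x) \<partial>m1) = (\<integral>x. w x *\<^sub>R iexp (t * g x) \<partial>m2)"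
    and B: "B \<in> sets borel"
  shows "(\<integral>x. w x * indicator B (g x) \<partial>m1) = (\<integral>x. w x * indicator B (g x) \<partial>m2)"
proof -
  have [measurable]: "g \<in> borel_measurable m2" "w \<in> borel_measurable m2"
    using assms(4,5) unfolding measurable_cong_sets[OF sets refl] .
  define P where "P m = distr (density m (\<lambda>x. ennreal (w x))) borel g" for m
  have integral_P: "(\<integral>y. h y \<partial>P m) = (\<integral>x. w x *\<^sub>R h (g x) \<partial>m)"
    if "sets m = sets m1" "h \<in> borel_measurable borel" for m and h :: "real \<Rightarrow> 'b::{banach, second_countable_topology}"
  proof -
    have [measurable]: "g \<in> borel_measurable m" "w \<in> borel_measurable m"
      using assms(4,5) unfolding measurable_cong_sets[OF that(1) refl] .
    show ?thesis
      unfolding P_def using w_nonneg that(2) by (simp add: integral_distr integral_density)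
  qed
  have "P m1 = P m2"
  proof (rule finite_measure_eq_if_char_eq)
    show "finite_measure (P m1)" "finite_measure (P m2)"
      unfolding P_def using assms(1,2) w_bound
      by (auto intro!: finite_measure.finite_measure_distr finite_measure_density_bounded)
    show "sets (P m1) = sets borel" "sets (P m2) = sets borel" by (simp_all add: P_def)
    show "(\<integral>y. iexp (t * y) \<partial>P m1) = (\<integral>y. iexp (t * y) \<partial>P m2)" for t
      using char[of t] sets by (simp add: integral_P)
  qed
  moreover have "(\<integral>x. w x * indicator B (g x) \<partial>m) = (\<integral>y. indicator B y \<partial>P m)"
    if "sets m = sets m1" for m
    using integral_P[OF that, of "indicator B :: real \<Rightarrow> real"] B by simp
  ultimately show ?thesis
    using sets by metis
qed

text \<open>Uniqueness only applies to nonnegative weights, so compare the weights \<open>1 + g \<circ> \<theta>\<close> and \<open>1\<close>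
  and subtract.\<close>
lemma integral_indicator_mult_eq_if_char_eq:
  fixes g :: "real \<Rightarrow> real" and a b :: complex
  assumes fin: "finite_measure m1" "finite_measure m2" and sets: "sets m1 = sets m2"
    and [measurable]: "f \<in> borel_measurable m1" "\<theta> \<in> borel_measurable m1" "g \<in> borel_measurable borel"
    and g_bound: "\<And>y. \<bar>g y\<bar> \<le> 1"
    and g_iexp: "\<And>y. complex_of_real (g y) = a * iexp y + b * iexp (- y)"
    and char: "\<And>s c. (\<integral>x. iexp (s * f x + c * \<theta> x) \<partial>m1) = (\<integral>x. iexp (s * f x + c * \<theta> x) \<partial>m2)"
    and B: "B \<in> sets borel"
  shows "(\<integral>x. indicator B (f x) * g (\<theta> x) \<partial>m1) = (\<integral>x. indicator B (f x) * g (\<theta> x) \<partial>m2)"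
proof -
  have [measurable]: "f \<in> borel_measurable m2" "\<theta> \<in> borel_measurable m2"
    using assms(4,5) unfolding measurable_cong_sets[OF sets refl] .
  have char_0: "(\<integral>x. iexp (s * f x) \<partial>m1) = (\<integral>x. iexp (s * f x) \<partial>m2)" for s
    using char[of s 0] by simp
  have g_range: "0 \<le> 1 + g y" "1 + g y \<le> 2" for y
    using g_bound[of y] by (auto simp: abs_le_iff)
  have pointwise: "(1 + g (\<theta> x)) *\<^sub>R iexp (s * f x)
      = iexp (s * f x) + a * iexp (s * f x + 1 * \<theta> x) + b * iexp (s * f x + (- 1) * \<theta> x)" for s x
    by (simp add: scaleR_conv_of_real g_iexp algebra_simps flip: exp_add)
  have weighted: "(\<integral>x. (1 + g (\<theta> x)) *\<^sub>R iexp (s * f x) \<partial>m)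
      = (\<integral>x. iexp (s * f x) \<partial>m) + a * (\<integral>x. iexp (s * f x + 1 * \<theta> x) \<partial>m)
        + b * (\<integral>x. iexp (s * f x + (- 1) * \<theta> x) \<partial>m)"
    if "finite_measure m" "sets m = sets m1" for m s
  proof -
    interpret finite_measure m by fact
    have [measurable]: "f \<in> borel_measurable m" "\<theta> \<in> borel_measurable m"
      using assms(4,5) unfolding measurable_cong_sets[OF that(2) refl] .
    have "integrable m (\<lambda>x. iexp (s * f x + c * \<theta> x))" for c
      by (intro integrable_const_bound[where B=1]) auto
    from this[of 0] this[of 1] this[of "- 1"] show ?thesis
      unfolding pointwise by simp
  qed
  have "(\<integral>x. (1 + g (\<theta> x)) *\<^sub>R iexp (s * f x) \<partial>m1) = (\<integral>x. (1 + g (\<theta> x)) *\<^sub>R iexp (s * f x) \<partial>m2)"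
    for s
    by (simp only: weighted[OF fin(1) refl] weighted[OF fin(2) sets[symmetric]] char char_0)
  then have weight_1_plus_g: "(\<integral>x. (1 + g (\<theta> x)) * indicator B (f x) \<partial>m1)
      = (\<integral>x. (1 + g (\<theta> x)) * indicator B (f x) \<partial>m2)"
    using fin sets B g_range by (intro integral_weighted_indicator_eq_if_char_eq[where C=2]) auto
  have weight_1: "(\<integral>x. 1 * indicator B (f x) \<partial>m1) = (\<integral>x. (1::real) * indicator B (f x) \<partial>m2)"
    using fin sets B char_0
    by (intro integral_weighted_indicator_eq_if_char_eq[where C=1]) auto
  have difference: "(\<integral>x. indicator B (f x) * g (\<theta> x) \<partial>m)
      = (\<integral>x. (1 + g (\<theta> x)) * indicator B (f x) \<partial>m) - (\<integral>x. 1 * indicator B (f x) \<partial>m)"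
    if "finite_measure m" "sets m = sets m1" for m
  proof -
    interpret finite_measure m by fact
    have [measurable]: "f \<in> borel_measurable m" "\<theta> \<in> borel_measurable m"
      using assms(4,5) unfolding measurable_cong_sets[OF that(2) refl] .
    have "integrable m (\<lambda>x. (1 + g (\<theta> x)) * indicator B (f x))"
      using B g_range by (intro integrable_const_bound[where B=2]) (auto simp: indicator_def)
    moreover have "integrable m (\<lambda>x. (1::real) * indicator B (f x))"
      using B by (intro integrable_const_bound[where B=1]) (auto simp: indicator_def)
    ultimately show ?thesis
      by (subst Bochner_Integration.integral_diff[symmetric]) (simp_all add: algebra_simps)
  qed
  show ?thesis
    using difference[OF fin(1) refl] difference[OF fin(2) sets[symmetric]] weight_1_plus_g weight_1
    by simp
qed

lemma cos_eq_iexp: "complex_of_real (cos y) = 1 / 2 * iexp y + 1 / 2 * iexp (- y)"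
  using cos_exp_eq[of "complex_of_real y"] by (simp add: cos_of_real field_simps)

lemma sin_eq_iexp: "complex_of_real (sin y) = 1 / (2 * \<i>) * iexp y + - 1 / (2 * \<i>) * iexp (- y)"
  using sin_exp_eq[of "complex_of_real y"] by (simp add: sin_of_real field_simps)

lemma integral_indicator_iexp_eq_if_char_eq:
  assumes fin: "finite_measure m1" "finite_measure m2" and sets: "sets m1 = sets m2"
    and [measurable]: "f \<in> borel_measurable m1" "\<theta> \<in> borel_measurable m1"
    and char: "\<And>s c. (\<integral>x. iexp (s * f x + c * \<theta> x) \<partial>m1) = (\<integral>x. iexp (s * f x + c * \<theta> x) \<partial>m2)"
    and B: "B \<in> sets borel"
  shows "(\<integral>x. indicator B (f x) *\<^sub>R iexp (\<theta> x) \<partial>m1) = (\<integral>x. indicator B (f x) *\<^sub>R iexp (\<theta> x) \<partial>m2)"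
proof -
  have real_imag: "(\<integral>x. indicator B (f x) *\<^sub>R iexp (\<theta> x) \<partial>m)
      = complex_of_real (\<integral>x. indicator B (f x) * cos (\<theta> x) \<partial>m)
        + \<i> * complex_of_real (\<integral>x. indicator B (f x) * sin (\<theta> x) \<partial>m)"
    if "finite_measure m" "sets m = sets m1" for m
  proof -
    interpret finite_measure m by fact
    have [measurable]: "f \<in> borel_measurable m" "\<theta> \<in> borel_measurable m"
      using assms(4,5) unfolding measurable_cong_sets[OF that(2) refl] .
    have "integrable m (\<lambda>x. indicator B (f x) * cos (\<theta> x))"
      "integrable m (\<lambda>x. indicator B (f x) * sin (\<theta> x))"
      using B by (intro integrable_const_bound[where B=1]; simp add: indicator_def)+
    then have "integrable m (\<lambda>x. complex_of_real (indicator B (f x) * cos (\<theta> x)))"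
      "integrable m (\<lambda>x. \<i> * complex_of_real (indicator B (f x) * sin (\<theta> x)))"
      by (auto simp del: of_real_mult)
    moreover have "indicator B (f x) *\<^sub>R iexp (\<theta> x)
        = complex_of_real (indicator B (f x) * cos (\<theta> x)) + \<i> * complex_of_real (indicator B (f x) * sin (\<theta> x))"
      for x
      by (simp add: cis_conv_exp[symmetric] cis.ctr scaleR_conv_of_real complex_eq_iff)
    ultimately show ?thesis
      by (simp only: Bochner_Integration.integral_add integral_mult_right_zero integral_complex_of_real)
  qed
  have "(\<integral>x. indicator B (f x) * cos (\<theta> x) \<partial>m1) = (\<integral>x. indicator B (f x) * cos (\<theta> x) \<partial>m2)"
    using integral_indicator_mult_eq_if_char_eq[OF fin sets assms(4,5) _ _ cos_eq_iexp char B] by simp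
  moreover have "(\<integral>x. indicator B (f x) * sin (\<theta> x) \<partial>m1) = (\<integral>x. indicator B (f x) * sin (\<theta> x) \<partial>m2)"
    using integral_indicator_mult_eq_if_char_eq[OF fin sets assms(4,5) _ _ sin_eq_iexp char B] by simp
  ultimately show ?thesis
    using real_imag[OF fin(1) refl] real_imag[OF fin(2) sets[symmetric]] by simp
qed

text \<open>Induction on \<open>J\<close>: restricting both measures to the event \<open>f j \<in> B j\<close> keeps the joint
  characteristic functions of the remaining variables equal.\<close>
lemma emeasure_cylinder_eq_if_char_eq:
  fixes f :: "'i \<Rightarrow> 'x \<Rightarrow> real"
  assumes "finite J" "finite_measure m1" "finite_measure m2" "sets m1 = sets m2"
    and "\<And>j. j \<in> J \<Longrightarrow> f j \<in> borel_measurable m1"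
    and "\<And>t. (\<integral>x. iexp (\<Sum>j\<in>J. t j * f j x) \<partial>m1) = (\<integral>x. iexp (\<Sum>j\<in>J. t j * f j x) \<partial>m2)"
    and "\<And>j. j \<in> J \<Longrightarrow> B j \<in> sets borel"
  shows "emeasure m1 {x\<in>space m1. \<forall>j\<in>J. f j x \<in> B j} = emeasure m2 {x\<in>space m2. \<forall>j\<in>J. f j x \<in> B j}"
  using assms
proof (induction J arbitrary: m1 m2 rule: finite_induct)
  case empty
  interpret m1: finite_measure m1 by fact
  interpret m2: finite_measure m2 by fact
  show ?case
    using empty.prems(5) by (simp add: m1.emeasure_eq_measure m2.emeasure_eq_measure)
next
  case (insert j J)
  note fin = insert.prems(1,2) and sets = insert.prems(3)
  have space: "space m1 = space m2" using sets by (rule sets_eq_imp_space_eq)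
  have [measurable]: "f i \<in> borel_measurable m1" "f i \<in> borel_measurable m2" if "i \<in> insert j J" for i
    using insert.prems(4)[OF that] unfolding measurable_cong_sets[OF sets refl] by simp_all
  have Bj: "B j \<in> sets borel" using insert.prems(6) by simp
  define A where "A = {x\<in>space m1. f j x \<in> B j}"
  have "A \<in> sets m1" unfolding A_def using Bj by measurable
  then have A: "A \<in> sets m1" "A \<in> sets m2" using sets by simp_all
  define n where "n m = density m (indicator A)" for m :: "'x measure"
  have char_j: "(\<integral>x. iexp (s * f j x + c * (\<Sum>i\<in>J. t i * f i x)) \<partial>m1)
      = (\<integral>x. iexp (s * f j x + c * (\<Sum>i\<in>J. t i * f i x)) \<partial>m2)" for s c t
  proof -
    have "(\<Sum>i\<in>insert j J. ((\<lambda>i. c * t i)(j := s)) i * f i x) = s * f j x + c * (\<Sum>i\<in>J. t i * f i x)" for x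
      using insert.hyps by (auto simp: sum_distrib_left mult.assoc intro!: sum.cong)
    then show ?thesis using insert.prems(5)[of "(\<lambda>i. c * t i)(j := s)"] by simp
  qed
  have integral_n: "(\<integral>x. h x \<partial>n m) = (\<integral>x. indicator (B j) (f j x) *\<^sub>R h x \<partial>m)"
    if "sets m = sets m1" "h \<in> borel_measurable m1" for m and h :: "'x \<Rightarrow> complex"
  proof -
    have [measurable]: "h \<in> borel_measurable m" "A \<in> sets m"
      using that A unfolding measurable_cong_sets[OF that(1) refl] by simp_all
    have "indicator A x = (indicator (B j) (f j x) :: real)" if "x \<in> space m" for x
      using that sets_eq_imp_space_eq[OF \<open>sets m = sets m1\<close>] by (simp add: A_def indicator_def)
    then have "(\<integral>x. indicator A x *\<^sub>R h x \<partial>m) = (\<integral>x. indicator (B j) (f j x) *\<^sub>R h x \<partial>m)"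
      by (intro Bochner_Integration.integral_cong) simp_all
    then show ?thesis
      unfolding n_def ennreal_indicator[symmetric] by (simp add: integral_density)
  qed
  have "emeasure (n m1) {x\<in>space (n m1). \<forall>i\<in>J. f i x \<in> B i} = emeasure (n m2) {x\<in>space (n m2). \<forall>i\<in>J. f i x \<in> B i}"
  proof (rule insert.IH)
    show "finite_measure (n m1)" "finite_measure (n m2)"
      unfolding n_def using fin A by (auto intro!: finite_measureI simp: emeasure_restricted finite_measure.emeasure_finite)
    show "sets (n m1) = sets (n m2)" using sets by (simp add: n_def)
    show "f i \<in> borel_measurable (n m1)" if "i \<in> J" for i using that by (simp add: n_def)
    show "B i \<in> sets borel" if "i \<in> J" for i using that insert.prems(6) by simp
    show "(\<integral>x. iexp (\<Sum>i\<in>J. t i * f i x) \<partial>n m1) = (\<integral>x. iexp (\<Sum>i\<in>J. t i * f i x) \<partial>n m2)" for t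
      using integral_indicator_iexp_eq_if_char_eq[OF fin sets _ _ char_j Bj]
      by (simp add: integral_n sets)
  qed
  moreover have "{x\<in>space m. \<forall>i\<in>insert j J. f i x \<in> B i} = A \<inter> {x\<in>space (n m). \<forall>i\<in>J. f i x \<in> B i}"
    if "space m = space m1" for m
    using that by (auto simp: A_def n_def)
  moreover have "{x\<in>space m1. \<forall>i\<in>J. f i x \<in> B i} \<in> sets m1"
    using insert.hyps(1) insert.prems(6) by (intro sets.sets_Collect_finite_All) (auto intro: measurable_sets)
  ultimately show ?case
    using A sets space by (simp add: n_def emeasure_restricted)
qed

lemma indep_var_if_char_factorizes:
  fixes X Y :: "'x \<Rightarrow> real"
  assumes "prob_space M"
    and [measurable]: "X \<in> borel_measurable M" "Y \<in> borel_measurable M"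
    and char: "\<And>s t. (\<integral>x. iexp (s * X x + t * Y x) \<partial>M) = (\<integral>x. iexp (s * X x) \<partial>M) * (\<integral>x. iexp (t * Y x) \<partial>M)"
  shows "prob_space.indep_var M borel X borel Y"
proof -
  interpret prob_space M by fact
  define P where "P = distr M borel X"
  define R where "R = distr M borel Y"
  define XY where "XY = distr M (borel \<Otimes>\<^sub>M borel) (\<lambda>x. (X x, Y x))"
  interpret P: prob_space P unfolding P_def by (rule prob_space_distr) simp
  interpret R: prob_space R unfolding R_def by (rule prob_space_distr) simp
  interpret PR: pair_prob_space P R ..
  have sets_pair: "sets (P \<Otimes>\<^sub>M R) = sets (borel \<Otimes>\<^sub>M borel)"
    by (intro sets_pair_measure_cong) (simp_all add: P_def R_def)
  have space_pair: "space (P \<Otimes>\<^sub>M R) = UNIV" "space XY = UNIV"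
    using sets_eq_imp_space_eq[OF sets_pair] by (simp_all add: XY_def space_pair_measure)
  define coord where "coord b p = (if b then fst p else snd p)" for b and p :: "real \<times> real"
  have [measurable]: "coord b \<in> borel_measurable (borel \<Otimes>\<^sub>M borel)" for b
    unfolding coord_def by measurable
  have sum_coord: "(\<Sum>b\<in>UNIV. t b * coord b p) = t True * fst p + t False * snd p" for t p
    by (simp add: UNIV_bool coord_def)
  have joint_char: "(\<integral>p. iexp (\<Sum>b\<in>UNIV. t b * coord b p) \<partial>XY) = (\<integral>p. iexp (\<Sum>b\<in>UNIV. t b * coord b p) \<partial>(P \<Otimes>\<^sub>M R))"
    for t
  proof -
    have "(\<integral>p. iexp (\<Sum>b\<in>UNIV. t b * coord b p) \<partial>XY) = (\<integral>x. iexp (t True * X x + t False * Y x) \<partial>M)"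
      unfolding sum_coord XY_def by (subst integral_distr) auto
    also have "\<dots> = (\<integral>a. iexp (t True * a) \<partial>P) * (\<integral>b. iexp (t False * b) \<partial>R)"
      unfolding char P_def R_def by (subst (1 2) integral_distr) auto
    also have "\<dots> = (\<integral>p. iexp (t True * fst p) * iexp (t False * snd p) \<partial>(P \<Otimes>\<^sub>M R))"
    proof (subst PR.integral_fst'[symmetric])
      have "(\<lambda>p. iexp (t True * fst p) * iexp (t False * snd p)) \<in> borel_measurable (P \<Otimes>\<^sub>M R)"
        unfolding measurable_cong_sets[OF sets_pair refl] by measurable
      then show "integrable (P \<Otimes>\<^sub>M R) (\<lambda>p. iexp (t True * fst p) * iexp (t False * snd p))"
        by (intro PR.integrable_const_bound[where B=1]) (simp_all add: norm_mult)
    qed simp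
    also have "\<dots> = (\<integral>p. iexp (\<Sum>b\<in>UNIV. t b * coord b p) \<partial>(P \<Otimes>\<^sub>M R))"
      unfolding sum_coord by (simp add: exp_add[symmetric] algebra_simps)
    finally show ?thesis .
  qed
  have fin_XY: "finite_measure XY"
    unfolding XY_def by (intro prob_space.finite_measure prob_space_distr) simp
  have "P \<Otimes>\<^sub>M R = XY"
  proof (rule pair_measure_eqI)
    show "sets (P \<Otimes>\<^sub>M R) = sets XY" using sets_pair by (simp add: XY_def)
    fix A B assume A: "A \<in> sets P" and B: "B \<in> sets R"
    define C where "C b = (if b then A else B)" for b
    have "{p\<in>UNIV. \<forall>b\<in>UNIV. coord b p \<in> C b} = A \<times> B"
      by (auto simp: C_def coord_def UNIV_bool)
    moreover have "emeasure XY {p\<in>space XY. \<forall>b\<in>UNIV. coord b p \<in> C b}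
        = emeasure (P \<Otimes>\<^sub>M R) {p\<in>space (P \<Otimes>\<^sub>M R). \<forall>b\<in>UNIV. coord b p \<in> C b}"
      using A B sets_pair joint_char fin_XY
        prob_space.finite_measure[OF PR.prob_space_axioms]
      by (intro emeasure_cylinder_eq_if_char_eq) (auto simp: XY_def P_def R_def C_def)
    ultimately show "emeasure P A * emeasure R B = emeasure XY (A \<times> B)"
      using R.emeasure_pair_measure_Times[OF A B] space_pair by simp
  qed unfold_locales
  then show ?thesis
    unfolding indep_var_distribution_eq by (simp add: P_def R_def XY_def)
qed

section \<open>The algebraic dual \<open>Qhat\<close> and its cylinder \<open>\<sigma>\<close>-algebra\<close>

lemma Qstar_zero: "(\<lambda>\<phi>. 0) \<in> Qstar"
  by (simp add: Qstar_def linear_zero)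

lemma Qstar_add: "l1 \<in> Qstar \<Longrightarrow> l2 \<in> Qstar \<Longrightarrow> (\<lambda>\<phi>. l1 \<phi> + l2 \<phi>) \<in> Qstar"
  by (auto simp: Qstar_def linear_add linear_scale algebra_simps intro!: linearI continuous_on_add)

lemma Qstar_cmult: "l \<in> Qstar \<Longrightarrow> (\<lambda>\<phi>. c * l \<phi>) \<in> Qstar"
  by (auto simp: Qstar_def linear_add linear_scale algebra_simps intro!: linearI continuous_on_mult_left)

lemma Qstar_sum: "finite J \<Longrightarrow> J \<subseteq> Qstar \<Longrightarrow> (\<lambda>\<phi>. \<Sum>l\<in>J. t l * l \<phi>) \<in> Qstar"
  by (induction J rule: finite_induct) (simp_all add: Qstar_zero Qstar_add Qstar_cmult)

lemma Qstar_inner: "(\<lambda>\<phi>. inner u \<phi>) \<in> Qstar"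
  by (auto simp: Qstar_def inner_add_right intro!: linearI) (intro continuous_intros)

lemma Qhat_add: "x \<in> Qhat \<Longrightarrow> l1 \<in> Qstar \<Longrightarrow> l2 \<in> Qstar \<Longrightarrow> x (\<lambda>\<phi>. l1 \<phi> + l2 \<phi>) = x l1 + x l2"
  unfolding Qhat_def by blast

lemma Qhat_cmult: "x \<in> Qhat \<Longrightarrow> l \<in> Qstar \<Longrightarrow> x (\<lambda>\<phi>. c * l \<phi>) = c * x l"
  unfolding Qhat_def by blast

lemma Qhat_zero: "x \<in> Qhat \<Longrightarrow> x (\<lambda>\<phi>. 0) = 0"
  using Qhat_cmult[OF _ Qstar_zero, of x 0] by simp

lemma Qhat_lincomb:
  "x \<in> Qhat \<Longrightarrow> l1 \<in> Qstar \<Longrightarrow> l2 \<in> Qstar \<Longrightarrow> x (\<lambda>\<phi>. a * l1 \<phi> + b * l2 \<phi>) = a * x l1 + b * x l2"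
  by (simp add: Qhat_add[OF _ Qstar_cmult Qstar_cmult] Qhat_cmult)

lemma Qhat_sum:
  assumes "x \<in> Qhat" "finite J" "J \<subseteq> Qstar"
  shows "x (\<lambda>\<phi>. \<Sum>l\<in>J. t l * l \<phi>) = (\<Sum>l\<in>J. t l * x l)"
  using assms(2,3)
proof (induction J rule: finite_induct)
  case empty
  then show ?case using assms(1) by (simp add: Qhat_zero)
next
  case (insert l J)
  then have "x (\<lambda>\<phi>. \<Sum>l\<in>insert l J. t l * l \<phi>) = x (\<lambda>\<phi>. t l * l \<phi>) + x (\<lambda>\<phi>. \<Sum>l\<in>J. t l * l \<phi>)"
    using assms(1) insert by (simp add: Qhat_add[OF assms(1) Qstar_cmult Qstar_sum])
  also have "\<dots> = t l * x l + (\<Sum>l\<in>J. t l * x l)"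
    using insert assms(1) by (simp add: Qhat_cmult)
  finally show ?case using insert by simp
qed

lemma Qhat_subset_space_PiM: "Qhat \<subseteq> space (Pi\<^sub>M Qstar (\<lambda>_. borel))"
  by (auto simp: Qhat_def space_PiM PiE_def extensional_def)

definition Qhat_sets :: "(('q::real_normed_vector \<Rightarrow> real) \<Rightarrow> real) set set" where
  "Qhat_sets = sets (restrict_space (Pi\<^sub>M Qstar (\<lambda>_. borel)) Qhat)"

lemma space_eq_Qhat:
  fixes m :: "(('q::real_normed_vector \<Rightarrow> real) \<Rightarrow> real) measure"
  assumes "sets m = Qhat_sets"
  shows "space m = Qhat"
  using sets_eq_imp_space_eq[OF assms[unfolded Qhat_sets_def]] Qhat_subset_space_PiM
  by (auto simp: space_restrict_space)

lemma measurable_Qhat_eval: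
  fixes m :: "(('q::real_normed_vector \<Rightarrow> real) \<Rightarrow> real) measure"
  assumes "sets m = Qhat_sets"
  shows "(\<lambda>x. x l) \<in> borel_measurable m"
proof (cases "l \<in> Qstar")
  case True
  then have "(\<lambda>x. x l) \<in> borel_measurable (restrict_space (Pi\<^sub>M Qstar (\<lambda>_. borel)) Qhat)"
    by (intro measurable_restrict_space1 measurable_component_singleton)
  then show ?thesis unfolding measurable_cong_sets[OF assms[unfolded Qhat_sets_def] refl] .
next
  case False
  then have "x l = undefined" if "x \<in> space m" for x
    using that space_eq_Qhat[OF assms] by (auto simp: Qhat_def extensional_def)
  then show ?thesis
    using measurable_cong[of m "\<lambda>x. x l" "\<lambda>_. undefined"] by simp
qed

lemma Qhat_sets_generated:
  "Qhat_sets = sigma_sets Qhat ((\<lambda>A. A \<inter> Qhat) ` prod_algebra Qstar (\<lambda>_. borel))"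
proof -
  let ?P = "Pi\<^sub>M Qstar (\<lambda>_. borel) :: (('q::real_normed_vector \<Rightarrow> real) \<Rightarrow> real) measure"
  have "Qhat_sets = {id -` A \<inter> Qhat | A. A \<in> sigma_sets (space ?P) (prod_algebra Qstar (\<lambda>_. borel))}"
    unfolding Qhat_sets_def sets_restrict_space sets_PiM space_PiM by (auto simp: comp_def)
  also have "\<dots> = sigma_sets Qhat {id -` A \<inter> Qhat | A. A \<in> prod_algebra Qstar (\<lambda>_. borel)}"
    using Qhat_subset_space_PiM by (intro sigma_sets_vimage_commute) auto
  finally show ?thesis
    by (simp add: Setcompr_eq_image)
qed

text \<open>Cylinder sets form an intersection-stable generator, and on each cylinder the two
  measures agree by the finite-dimensional result, since \<open>\<Sum>j\<in>J. t j * x j = x (\<Sum>j\<in>J. t j * j)\<close>.\<close>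
lemma Qhat_measure_eqI_char:
  fixes m1 m2 :: "(('q::real_normed_vector \<Rightarrow> real) \<Rightarrow> real) measure"
  assumes sets: "sets m1 = Qhat_sets" "sets m2 = Qhat_sets"
    and fin: "finite_measure m1" "finite_measure m2"
    and char: "\<And>l. l \<in> Qstar \<Longrightarrow> (\<integral>x. iexp (x l) \<partial>m1) = (\<integral>x. iexp (x l) \<partial>m2)"
  shows "m1 = m2"
proof -
  define E where "E = (\<lambda>A. A \<inter> Qhat) ` prod_algebra Qstar (\<lambda>_::'q \<Rightarrow> real. borel :: real measure)"
  show ?thesis
  proof (rule measure_eqI_generator_eq[where E=E and \<Omega>=Qhat and A="\<lambda>_. Qhat"])
    have space: "space m1 = Qhat" "space m2 = Qhat"
      using sets by (simp_all add: space_eq_Qhat)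
    show "Int_stable E"
    proof (rule Int_stableI)
      fix a b assume "a \<in> E" "b \<in> E"
      then obtain A B where AB: "a = A \<inter> Qhat" "b = B \<inter> Qhat"
        "A \<in> prod_algebra Qstar (\<lambda>_. borel)" "B \<in> prod_algebra Qstar (\<lambda>_. borel)"
        by (auto simp: E_def)
      then have "A \<inter> B \<in> prod_algebra Qstar (\<lambda>_. borel)"
        using Int_stable_prod_algebra unfolding Int_stable_def by blast
      moreover have "a \<inter> b = (A \<inter> B) \<inter> Qhat" using AB by auto
      ultimately show "a \<inter> b \<in> E" unfolding E_def by blast
    qed
    show "E \<subseteq> Pow Qhat" by (auto simp: E_def)
    show "emeasure m1 Qhat \<noteq> \<infinity>" using finite_measure.emeasure_finite[OF fin(1)] by simp
    show "sets m1 = sigma_sets Qhat E" "sets m2 = sigma_sets Qhat E"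
      using sets by (simp_all add: Qhat_sets_generated E_def)
    have "Qhat \<in> E"
      unfolding E_def using space_in_prod_algebra[of Qstar "\<lambda>_. borel :: real measure"] Qhat_subset_space_PiM
      by (intro image_eqI[where x="space (Pi\<^sub>M Qstar (\<lambda>_. borel :: real measure))"]) (auto simp: space_PiM)
    then show "range (\<lambda>_. Qhat) \<subseteq> E" by auto
    show "(\<Union>i::nat. Qhat) = Qhat" by simp
    fix X assume "X \<in> E"
    then obtain A where A: "X = A \<inter> Qhat" "A \<in> prod_algebra Qstar (\<lambda>_. borel)"
      by (auto simp: E_def)
    then obtain J B where J: "finite J" "J \<subseteq> Qstar" and B: "\<And>l. l \<in> J \<Longrightarrow> B l \<in> sets borel"
      and X: "X = prod_emb Qstar (\<lambda>_. borel) J (\<Pi>\<^sub>E l\<in>J. B l) \<inter> Qhat"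
      by (auto elim!: prod_algebraE)
    have X_eq: "X = {x\<in>space m. \<forall>l\<in>J. x l \<in> B l}" if "space m = Qhat" for m :: "(('q \<Rightarrow> real) \<Rightarrow> real) measure"
      using X that Qhat_subset_space_PiM J(2) by (auto simp: prod_emb_def space_PiM)
    have "(\<integral>x. iexp (\<Sum>l\<in>J. t l * x l) \<partial>m) = (\<integral>x. iexp (x (\<lambda>\<phi>. \<Sum>l\<in>J. t l * l \<phi>)) \<partial>m)"
      if "space m = Qhat" for m :: "(('q \<Rightarrow> real) \<Rightarrow> real) measure" and t
      using that J by (intro Bochner_Integration.integral_cong) (simp_all add: Qhat_sum)
    then have "(\<integral>x. iexp (\<Sum>l\<in>J. t l * x l) \<partial>m1) = (\<integral>x. iexp (\<Sum>l\<in>J. t l * x l) \<partial>m2)" for t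
      using char[OF Qstar_sum[OF J]] space by simp
    then show "emeasure m1 X = emeasure m2 X"
      using emeasure_cylinder_eq_if_char_eq[where f="\<lambda>l x. x l", OF J(1) fin] sets J B space
      by (simp add: X_eq measurable_Qhat_eval)
  qed
qed

section \<open>Norms of functionals split along a unit vector\<close>

lemma Qstar_imp_bounded_linear:
  fixes l :: "'q::real_normed_vector \<Rightarrow> real"
  assumes "l \<in> Qstar"
  shows "bounded_linear l"
proof -
  have lin: "linear l" and "isCont l 0"
    using assms by (auto simp: Qstar_def continuous_on_eq_continuous_at)
  moreover have "l 0 = 0" using lin by (rule linear_0)
  ultimately obtain d where d: "d > 0" "\<And>x. x \<noteq> 0 \<Longrightarrow> norm x < d \<Longrightarrow> \<bar>l x\<bar> < 1"
    unfolding isCont_def LIM_eq by (metis diff_zero real_norm_def zero_less_one)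
  have "\<bar>l x\<bar> \<le> norm x * (2 / d)" for x
  proof (cases "x = 0")
    case False
    define c where "c = d / (2 * norm x)"
    have c: "c > 0" "norm (c *\<^sub>R x) < d" using d(1) False by (simp_all add: c_def)
    then have "c * \<bar>l x\<bar> < 1"
      using d(2)[of "c *\<^sub>R x"] False linear_scale[OF lin] by (simp add: abs_mult)
    then show ?thesis
      using c(1) d(1) False by (simp add: c_def field_simps)
  qed (simp add: \<open>l 0 = 0\<close>)
  then show ?thesis
    using lin by (intro bounded_linear_intro[where K="2 / d"]) (auto simp: linear_add linear_scale)
qed

lemma norm_sq_eq_orthogonal_projection:
  fixes u \<phi> :: "'q::real_inner"
  assumes "norm u = 1"
  shows "(norm (\<phi> - inner u \<phi> *\<^sub>R u))\<^sup>2 + (inner u \<phi>)\<^sup>2 = (norm \<phi>)\<^sup>2"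
proof -
  have "inner u u = 1" using assms by (simp add: norm_eq_sqrt_inner)
  then have "inner (\<phi> - inner u \<phi> *\<^sub>R u) (\<phi> - inner u \<phi> *\<^sub>R u) + (inner u \<phi>)\<^sup>2 = inner \<phi> \<phi>"
    by (simp add: inner_commute power2_eq_square algebra_simps)
  then show ?thesis by (simp only: power2_norm_eq_inner)
qed

lemma onorm_orthogonal_add_le:
  fixes K :: "'q::real_inner \<Rightarrow> real"
  assumes K: "bounded_linear K" and u: "norm u = 1" and Ku: "K u = 0"
  shows "onorm (\<lambda>\<phi>. K \<phi> + t * inner u \<phi>) \<le> sqrt ((onorm K)\<^sup>2 + t\<^sup>2)"
proof (rule onorm_bound)
  fix \<phi>
  define w where "w = \<phi> - inner u \<phi> *\<^sub>R u"
  have "K w = K \<phi>"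
    using Ku linear_diff[OF bounded_linear.linear[OF K]] linear_scale[OF bounded_linear.linear[OF K]]
    by (simp add: w_def)
  then have "norm (K \<phi> + t * inner u \<phi>) \<le> onorm K * norm w + \<bar>t\<bar> * \<bar>inner u \<phi>\<bar>"
    using onorm[OF K, of w] by (simp add: abs_mult[symmetric] abs_triangle_ineq order_trans[OF abs_triangle_ineq])
  also have "\<dots> = inner (Complex (onorm K) \<bar>t\<bar>) (Complex (norm w) \<bar>inner u \<phi>\<bar>)"
    by (simp add: inner_complex_def)
  also have "\<dots> \<le> norm (Complex (onorm K) \<bar>t\<bar>) * norm (Complex (norm w) \<bar>inner u \<phi>\<bar>)"
    by (rule norm_cauchy_schwarz)
  also have "\<dots> = sqrt ((onorm K)\<^sup>2 + t\<^sup>2) * norm \<phi>"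
    using norm_sq_eq_orthogonal_projection[OF u, of \<phi>] by (simp add: complex_norm w_def)
  finally show "norm (K \<phi> + t * inner u \<phi>) \<le> sqrt ((onorm K)\<^sup>2 + t\<^sup>2) * norm \<phi>" .
qed simp

text \<open>The test vector \<open>K w *\<^sub>R w + (t * (norm w)\<^sup>2) *\<^sub>R u\<close> is where the functional
  \<open>\<phi> \<mapsto> K \<phi> + t * inner u \<phi>\<close> attains its norm on the span of \<open>w\<close> and \<open>u\<close>.\<close>
lemma orthogonal_sq_le_onorm_add:
  fixes K :: "'q::real_inner \<Rightarrow> real"
  assumes K: "bounded_linear K" and u: "norm u = 1" and Ku: "K u = 0" and w: "inner u w = 0"
  shows "(K w)\<^sup>2 + t\<^sup>2 * (norm w)\<^sup>2 \<le> (onorm (\<lambda>\<phi>. K \<phi> + t * inner u \<phi>))\<^sup>2 * (norm w)\<^sup>2"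
proof -
  define F where "F = (\<lambda>\<phi>. K \<phi> + t * inner u \<phi>)"
  define S where "S = (K w)\<^sup>2 + t\<^sup>2 * (norm w)\<^sup>2"
  define \<psi> where "\<psi> = K w *\<^sub>R w + (t * (norm w)\<^sup>2) *\<^sub>R u"
  have F: "bounded_linear F"
    unfolding F_def by (intro bounded_linear_add K bounded_linear_const_mult bounded_linear_inner_right)
  have uu: "inner u u = 1" using u by (simp add: norm_eq_sqrt_inner)
  have "F \<psi> = S"
    using Ku w uu linear_add[OF bounded_linear.linear[OF K]] linear_scale[OF bounded_linear.linear[OF K]]
    by (simp add: F_def S_def \<psi>_def inner_add_right power2_eq_square)
  moreover have "(norm \<psi>)\<^sup>2 = (K w)\<^sup>2 * inner w w + (t * (norm w)\<^sup>2)\<^sup>2 * inner u u"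
    using w unfolding power2_norm_eq_inner[of \<psi>]
    by (simp add: \<psi>_def inner_commute power2_eq_square algebra_simps)
  then have "(norm \<psi>)\<^sup>2 = (norm w)\<^sup>2 * S"
    using uu by (simp add: S_def power2_norm_eq_inner[symmetric] power2_eq_square algebra_simps)
  moreover have "S \<ge> 0" by (simp add: S_def)
  ultimately have "S * S \<le> (onorm F)\<^sup>2 * ((norm w)\<^sup>2 * S)"
    using onorm[OF F, of \<psi>] onorm_pos_le[OF F]
    by (metis abs_of_nonneg power2_eq_square power_mono power_mult_distrib real_norm_def)
  then have "S * S \<le> ((onorm F)\<^sup>2 * (norm w)\<^sup>2) * S"
    by (simp add: algebra_simps)
  then have "S \<le> (onorm F)\<^sup>2 * (norm w)\<^sup>2"
    using \<open>S \<ge> 0\<close> by (cases "S = 0") (auto simp: mult_le_cancel_right)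
  then show ?thesis by (simp add: F_def S_def)
qed

lemma onorm_orthogonal_add_ge:
  fixes K :: "'q::real_inner \<Rightarrow> real"
  assumes K: "bounded_linear K" and u: "norm u = 1" and Ku: "K u = 0"
  shows "(onorm K)\<^sup>2 + t\<^sup>2 \<le> (onorm (\<lambda>\<phi>. K \<phi> + t * inner u \<phi>))\<^sup>2"
proof -
  define N where "N = onorm (\<lambda>\<phi>. K \<phi> + t * inner u \<phi>)"
  have F: "bounded_linear (\<lambda>\<phi>. K \<phi> + t * inner u \<phi>)"
    by (intro bounded_linear_add K bounded_linear_const_mult bounded_linear_inner_right)
  have "inner u u = 1" using u by (simp add: norm_eq_sqrt_inner)
  then have "\<bar>t\<bar> \<le> N"
    using onorm[OF F, of u] Ku u by (simp add: N_def)
  then have "t\<^sup>2 \<le> N\<^sup>2"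
    by (metis abs_ge_zero power2_abs power_mono)
  have "onorm K \<le> sqrt (N\<^sup>2 - t\<^sup>2)"
  proof (rule onorm_bound)
    fix \<phi>
    define w where "w = \<phi> - inner u \<phi> *\<^sub>R u"
    have "K w = K \<phi>"
      using Ku linear_diff[OF bounded_linear.linear[OF K]] linear_scale[OF bounded_linear.linear[OF K]]
      by (simp add: w_def)
    moreover have "inner u w = 0"
      using u by (simp add: w_def inner_diff_right norm_eq_sqrt_inner)
    moreover have "(norm w)\<^sup>2 \<le> (norm \<phi>)\<^sup>2"
      using norm_sq_eq_orthogonal_projection[OF u, of \<phi>] zero_le_power2[of "inner u \<phi>"]
      unfolding w_def by linarith
    ultimately have "(K \<phi>)\<^sup>2 \<le> (N\<^sup>2 - t\<^sup>2) * (norm \<phi>)\<^sup>2"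
      using orthogonal_sq_le_onorm_add[OF K u Ku, of w t] \<open>t\<^sup>2 \<le> N\<^sup>2\<close>
      by (smt (verit) N_def mult_left_mono left_diff_distrib)
    then show "norm (K \<phi>) \<le> sqrt (N\<^sup>2 - t\<^sup>2) * norm \<phi>"
      by (metis abs_of_nonneg norm_ge_zero real_norm_def real_sqrt_abs real_sqrt_le_mono real_sqrt_mult)
  qed (use \<open>t\<^sup>2 \<le> N\<^sup>2\<close> in simp)
  then show ?thesis
    using \<open>t\<^sup>2 \<le> N\<^sup>2\<close> onorm_pos_le[OF K] unfolding N_def[symmetric]
    by (metis le_diff_eq power_mono real_sqrt_pow2 diff_ge_0_iff_ge)
qed

lemma onorm_orthogonal_add_sq:
  fixes K :: "'q::real_inner \<Rightarrow> real"
  assumes "bounded_linear K" "norm u = 1" "K u = 0"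
  shows "(onorm (\<lambda>\<phi>. K \<phi> + t * inner u \<phi>))\<^sup>2 = (onorm K)\<^sup>2 + t\<^sup>2"
proof (rule antisym)
  have "0 \<le> onorm (\<lambda>\<phi>. K \<phi> + t * inner u \<phi>)"
    by (intro onorm_pos_le bounded_linear_add assms(1) bounded_linear_const_mult bounded_linear_inner_right)
  then have "(onorm (\<lambda>\<phi>. K \<phi> + t * inner u \<phi>))\<^sup>2 \<le> (sqrt ((onorm K)\<^sup>2 + t\<^sup>2))\<^sup>2"
    by (rule power_mono[OF onorm_orthogonal_add_le[OF assms]])
  then show "(onorm (\<lambda>\<phi>. K \<phi> + t * inner u \<phi>))\<^sup>2 \<le> (onorm K)\<^sup>2 + t\<^sup>2" by simp
qed (rule onorm_orthogonal_add_ge[OF assms])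

section \<open>A complex Gaussian integral\<close>

lemma std_normal_density_shift:
  "std_normal_density (b + z) * exp (b * (b + z)) = exp (b\<^sup>2 / 2) * std_normal_density z"
proof -
  have "exp (- (b + z)\<^sup>2 / 2) * exp (b * (b + z)) = exp (b\<^sup>2 / 2) * exp (- z\<^sup>2 / 2)"
    by (simp add: exp_add[symmetric] power2_eq_square field_simps)
  then show ?thesis by (simp add: std_normal_density_def)
qed

text \<open>The characteristic function of the standard normal law continued to the complex argument
  \<open>\<alpha> - \<i> \<beta>\<close>; the exponential tilt \<open>exp (\<beta> * y)\<close> is absorbed by translating the density.\<close>
lemma std_normal_exp_iexp:
  fixes \<alpha> \<beta> :: real
  shows "integrable std_normal_distribution (\<lambda>y. exp (\<beta> * y) *\<^sub>R iexp (\<alpha> * y))"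
    and "(\<integral>y. exp (\<beta> * y) *\<^sub>R iexp (\<alpha> * y) \<partial>std_normal_distribution) = exp (\<beta>\<^sup>2 / 2 - \<alpha>\<^sup>2 / 2) *\<^sub>R iexp (\<alpha> * \<beta>)"
proof -
  interpret real_distribution std_normal_distribution by (rule real_dist_normal_dist)
  define G where "G z = std_normal_density z *\<^sub>R iexp (\<alpha> * z)" for z
  define F where "F y = std_normal_density y *\<^sub>R (exp (\<beta> * y) *\<^sub>R iexp (\<alpha> * y))" for y
  have "integrable std_normal_distribution (\<lambda>z. iexp (\<alpha> * z))"
    by (rule integrable_const_bound[where B=1]) auto
  then have G: "integrable lborel G"
    unfolding G_def by (subst (asm) integrable_density) auto
  have "(\<integral>z. G z \<partial>lborel) = char std_normal_distribution \<alpha>"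
    unfolding char_def G_def by (subst integral_density) auto
  then have integral_G: "(\<integral>z. G z \<partial>lborel) = complex_of_real (exp (- \<alpha>\<^sup>2 / 2))"
    by (simp add: char_std_normal_distribution)
  have F_shift: "F (\<beta> + 1 * z) = (exp (\<beta>\<^sup>2 / 2) *\<^sub>R iexp (\<alpha> * \<beta>)) * G z" for z
  proof -
    have "iexp (\<alpha> * (\<beta> + z)) = iexp (\<alpha> * \<beta>) * iexp (\<alpha> * z)"
      by (simp add: exp_add[symmetric] algebra_simps)
    then show ?thesis
      using std_normal_density_shift[of \<beta> z] unfolding F_def G_def
      by (simp add: scaleR_conv_of_real algebra_simps flip: of_real_mult)
  qed
  have "integrable lborel (\<lambda>z. F (\<beta> + 1 * z))"
    unfolding F_shift using G by (rule integrable_mult_right)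
  then have F: "integrable lborel F"
    using lborel_integrable_real_affine_iff[of 1 F \<beta>] by simp
  then show "integrable std_normal_distribution (\<lambda>y. exp (\<beta> * y) *\<^sub>R iexp (\<alpha> * y))"
    unfolding F_def by (subst integrable_density) auto
  have "(\<integral>y. exp (\<beta> * y) *\<^sub>R iexp (\<alpha> * y) \<partial>std_normal_distribution) = (\<integral>y. F y \<partial>lborel)"
    unfolding F_def by (subst integral_density) auto
  also have "\<dots> = (\<integral>z. F (\<beta> + 1 * z) \<partial>lborel)"
    using lborel_integral_real_affine[of 1 F \<beta>] by simp
  also have "\<dots> = (exp (\<beta>\<^sup>2 / 2) * exp (- \<alpha>\<^sup>2 / 2)) *\<^sub>R iexp (\<alpha> * \<beta>)"
    unfolding F_shift integral_mult_right_zero integral_G by (simp add: scaleR_conv_of_real)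
  finally show "(\<integral>y. exp (\<beta> * y) *\<^sub>R iexp (\<alpha> * y) \<partial>std_normal_distribution)
      = exp (\<beta>\<^sup>2 / 2 - \<alpha>\<^sup>2 / 2) *\<^sub>R iexp (\<alpha> * \<beta>)"
    by (simp add: exp_add[symmetric])
qed

section \<open>Translations of \<open>Qhat\<close> and the factor \<open>\<beta>\<close>\<close>

lemma hat_shift_in_Qhat:
  fixes c :: "'q::real_normed_vector"
  assumes x: "x \<in> Qhat"
  shows "hat_shift c x \<in> Qhat"
  using Qhat_add[OF x] Qhat_cmult[OF x]
  unfolding Qhat_def hat_shift_def by (auto simp: algebra_simps Qstar_add Qstar_cmult)

lemma hat_shift_apply: "l \<in> Qstar \<Longrightarrow> hat_shift c x l = x l + l c"
  by (simp add: hat_shift_def)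

lemma hat_shift_zero: "x \<in> Qhat \<Longrightarrow> hat_shift 0 x = x"
  by (auto simp: fun_eq_iff hat_shift_def Qhat_def extensional_def Qstar_def linear_0)

lemma hat_shift_neg_cancel: "x \<in> Qhat \<Longrightarrow> hat_shift (- c) (hat_shift c x) = x"
  by (auto simp: fun_eq_iff hat_shift_def Qhat_def extensional_def Qstar_def linear_neg)

lemma measurable_hat_shift:
  fixes m :: "(('q::real_normed_vector \<Rightarrow> real) \<Rightarrow> real) measure"
  assumes sets: "sets m = Qhat_sets"
  shows "hat_shift c \<in> measurable m m"
proof -
  have "hat_shift c = (\<lambda>x. \<lambda>l\<in>Qstar. x l + l c)"
    by (simp add: hat_shift_def fun_eq_iff)
  also have "\<dots> \<in> measurable m (Pi\<^sub>M Qstar (\<lambda>_. borel))"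
    by (intro measurable_restrict borel_measurable_add measurable_const measurable_Qhat_eval[OF sets]) simp_all
  finally have "hat_shift c \<in> measurable m (restrict_space (Pi\<^sub>M Qstar (\<lambda>_. borel)) Qhat)"
    using space_eq_Qhat[OF sets] by (intro measurable_restrict_space2) (auto simp: hat_shift_in_Qhat)
  then show ?thesis unfolding measurable_cong_sets[OF refl sets[unfolded Qhat_sets_def]] .
qed

text \<open>The Cameron--Martin density of the Gaussian measure translated by \<open>v\<close>.\<close>
definition shift_density :: "'q::real_inner \<Rightarrow> (('q \<Rightarrow> real) \<Rightarrow> real) \<Rightarrow> real" where
  "shift_density v x = exp (- (norm v)\<^sup>2 - 2 * x (\<lambda>\<phi>. inner v \<phi>))"

lemma norm_beta_hat_sq:
  assumes "admissible br q \<Omega>"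
  shows "(cmod (beta_hat \<theta> br q \<Omega> diff \<eta> \<eta>' x))\<^sup>2 = shift_density (q (diff \<eta>' \<eta>)) x"
proof -
  define v where "v = q (diff \<eta>' \<eta>)"
  have inner_\<Omega>: "inner a b = Re (\<Omega> a b)" for a b
    using assms by (simp add: admissible_def)
  have "Re (\<Omega> v v) = (norm v)\<^sup>2"
    by (simp add: inner_\<Omega>[symmetric] power2_norm_eq_inner)
  then have "cmod (beta_hat \<theta> br q \<Omega> diff \<eta> \<eta>' x) = exp (- (norm v)\<^sup>2 / 2 - x (\<lambda>\<phi>. inner v \<phi>))"
    by (simp add: beta_hat_def v_def[symmetric] inner_\<Omega>)
  then show ?thesis
    by (simp add: shift_density_def v_def[symmetric] power2_eq_square exp_add[symmetric] field_simps)
qed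

lemma beta_hat_nonzero: "beta_hat \<theta> br q \<Omega> diff \<eta> \<eta>' x \<noteq> 0"
  by (simp add: beta_hat_def)

lemma L2_and_L2norm_eq_if_nn_integral_eq:
  assumes \<psi>: "\<psi> \<in> L2 M" and \<phi>: "\<phi> \<in> borel_measurable M"
    and eq: "(\<integral>\<^sup>+x. ennreal ((cmod (\<phi> x))\<^sup>2) \<partial>M) = (\<integral>\<^sup>+x. ennreal ((cmod (\<psi> x))\<^sup>2) \<partial>M)"
  shows "\<phi> \<in> L2 M" and "L2norm M \<phi> = L2norm M \<psi>"
proof -
  have [measurable]: "\<psi> \<in> borel_measurable M" and "integrable M (\<lambda>x. (cmod (\<psi> x))\<^sup>2)"
    using \<psi> by (auto simp: L2_def)
  then have "(\<integral>\<^sup>+x. ennreal ((cmod (\<psi> x))\<^sup>2) \<partial>M) = ennreal (\<integral>x. (cmod (\<psi> x))\<^sup>2 \<partial>M)"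
    by (intro nn_integral_eq_integral) auto
  then have "integrable M (\<lambda>x. (cmod (\<phi> x))\<^sup>2)"
    using \<phi> eq by (intro integrableI_nn_integral_finite) auto
  then show "\<phi> \<in> L2 M" using \<phi> by (simp add: L2_def)
  have "(\<integral>x. (cmod (\<phi> x))\<^sup>2 \<partial>M) = (\<integral>x. (cmod (\<psi> x))\<^sup>2 \<partial>M)"
    using \<phi> eq by (simp add: integral_eq_nn_integral)
  then show "L2norm M \<phi> = L2norm M \<psi>" by (simp add: L2norm_def)
qed

section \<open>The Gaussian measure on \<open>Qhat\<close>\<close>

locale gaussian_Qhat_measure =
  fixes nu :: "(('q::{real_inner, complete_space} \<Rightarrow> real) \<Rightarrow> real) measure"
  assumes gaussian: "gaussian_Qhat nu"
begin

sublocale prob_space nu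
  using gaussian by (simp add: gaussian_Qhat_def)

lemma sets_nu: "sets nu = Qhat_sets"
  using gaussian by (simp add: gaussian_Qhat_def Qhat_sets_def)

lemma space_nu: "space nu = Qhat"
  using gaussian by (simp add: gaussian_Qhat_def)

lemma measurable_eval[measurable]: "(\<lambda>x. x l) \<in> borel_measurable nu"
  by (rule measurable_Qhat_eval[OF sets_nu])

lemma char_Qstar: "l \<in> Qstar \<Longrightarrow> (\<integral>x. iexp (x l) \<partial>nu) = complex_of_real (exp (- (onorm l)\<^sup>2 / 4))"
  using gaussian by (simp add: gaussian_Qhat_def)

lemma char_Qstar_lincomb:
  assumes "l1 \<in> Qstar" "l2 \<in> Qstar"
  shows "(\<integral>x. iexp (a * x l1 + b * x l2) \<partial>nu)
    = complex_of_real (exp (- (onorm (\<lambda>\<phi>. a * l1 \<phi> + b * l2 \<phi>))\<^sup>2 / 4))"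
proof -
  have "(\<integral>x. iexp (a * x l1 + b * x l2) \<partial>nu) = (\<integral>x. iexp (x (\<lambda>\<phi>. a * l1 \<phi> + b * l2 \<phi>)) \<partial>nu)"
    using assms by (intro Bochner_Integration.integral_cong) (simp_all add: space_nu Qhat_lincomb)
  then show ?thesis
    using assms by (simp add: char_Qstar Qstar_add Qstar_cmult)
qed

lemma distr_eval_inner_unit:
  assumes u: "norm u = 1"
  shows "distr nu borel (\<lambda>x. sqrt 2 * x (\<lambda>\<phi>. inner u \<phi>)) = std_normal_distribution"
proof (rule Levy_uniqueness[OF _ real_dist_normal_dist])
  show "real_distribution (distr nu borel (\<lambda>x. sqrt 2 * x (\<lambda>\<phi>. inner u \<phi>)))"
    by (simp add: real_distribution_def real_distribution_axioms_def prob_space_distr)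
  have "(onorm (\<lambda>\<phi>. (t * sqrt 2) * inner u \<phi>))\<^sup>2 = 2 * t\<^sup>2" for t
    using onorm_orthogonal_add_sq[of "\<lambda>_. 0" u "t * sqrt 2"] u by (simp add: onorm_zero power_mult_distrib)
  then have "(\<integral>x. iexp (t * (sqrt 2 * x (\<lambda>\<phi>. inner u \<phi>))) \<partial>nu) = char std_normal_distribution t" for t
    using char_Qstar_lincomb[OF Qstar_zero Qstar_inner, of 0 "t * sqrt 2"]
    by (simp add: char_std_normal_distribution space_nu Qhat_zero mult.assoc)
  then show "char (distr nu borel (\<lambda>x. sqrt 2 * x (\<lambda>\<phi>. inner u \<phi>))) = char std_normal_distribution"
    unfolding char_def by (subst integral_distr) auto
qed

lemma indep_var_eval_orthogonal:
  assumes u: "norm u = 1" and K: "K \<in> Qstar" and Ku: "K u = 0"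
  shows "indep_var borel (\<lambda>x. x K) borel (\<lambda>x. x (\<lambda>\<phi>. inner u \<phi>))"
proof (rule indep_var_if_char_factorizes[OF prob_space_axioms measurable_eval measurable_eval])
  have K_bl: "bounded_linear K" using K by (rule Qstar_imp_bounded_linear)
  then have sK: "bounded_linear (\<lambda>\<phi>. s * K \<phi>)" and "(\<lambda>\<phi>. s * K \<phi>) u = 0" for s
    using Ku by (auto intro: bounded_linear_const_mult)
  have "(onorm (\<lambda>\<phi>. s * K \<phi> + t * inner u \<phi>))\<^sup>2 = (onorm (\<lambda>\<phi>. s * K \<phi> + 0 * inner u \<phi>))\<^sup>2
      + (onorm (\<lambda>\<phi>. 0 * K \<phi> + t * inner u \<phi>))\<^sup>2" for s t
    using onorm_orthogonal_add_sq[OF sK u] Ku onorm_orthogonal_add_sq[OF bounded_linear_zero u, of t]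
    by (simp add: onorm_zero)
  then show "(\<integral>x. iexp (s * x K + t * x (\<lambda>\<phi>. inner u \<phi>)) \<partial>nu)
      = (\<integral>x. iexp (s * x K) \<partial>nu) * (\<integral>x. iexp (t * x (\<lambda>\<phi>. inner u \<phi>)) \<partial>nu)" for s t
    using char_Qstar_lincomb[OF K Qstar_inner, of s t] char_Qstar_lincomb[OF K Qstar_inner, of s 0]
      char_Qstar_lincomb[OF K Qstar_inner, of 0 t]
    by (simp add: exp_add[symmetric] add_divide_distrib flip: of_real_mult)
qed

lemma measurable_shift_density[measurable]: "shift_density v \<in> borel_measurable nu"
  unfolding shift_density_def by measurable

lemma measurable_hat_shift_nu[measurable]: "hat_shift c \<in> measurable nu nu"
  by (rule measurable_hat_shift[OF sets_nu])

lemma integral_iexp_eval_mult_normal: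
  fixes H :: "real \<Rightarrow> complex"
  assumes u: "norm u = 1" and K: "K \<in> Qstar" "K u = 0"
    and H: "integrable std_normal_distribution H" "H \<in> borel_measurable borel"
  shows "integrable nu (\<lambda>x. iexp (x K) * H (sqrt 2 * x (\<lambda>\<phi>. inner u \<phi>)))"
    and "(\<integral>x. iexp (x K) * H (sqrt 2 * x (\<lambda>\<phi>. inner u \<phi>)) \<partial>nu)
      = exp (- (onorm K)\<^sup>2 / 4) * (\<integral>y. H y \<partial>std_normal_distribution)"
proof -
  have indep: "indep_var borel (iexp \<circ> (\<lambda>x. x K)) borel ((\<lambda>y. H (sqrt 2 * y)) \<circ> (\<lambda>x. x (\<lambda>\<phi>. inner u \<phi>)))"
    using H(2) by (intro indep_var_compose[OF indep_var_eval_orthogonal[OF u K]]) auto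
  have "integrable nu (\<lambda>x. iexp (x K))"
    by (rule integrable_const_bound[where B=1]) auto
  moreover have "integrable (distr nu borel (\<lambda>x. sqrt 2 * x (\<lambda>\<phi>. inner u \<phi>))) H"
    using H(1) by (simp add: distr_eval_inner_unit[OF u])
  then have "integrable nu (\<lambda>x. H (sqrt 2 * x (\<lambda>\<phi>. inner u \<phi>)))"
    using H(2) by (subst (asm) integrable_distr_eq) auto
  moreover have "(\<integral>x. H (sqrt 2 * x (\<lambda>\<phi>. inner u \<phi>)) \<partial>nu) = (\<integral>y. H y \<partial>std_normal_distribution)"
    using H(2) integral_distr[of "\<lambda>x. sqrt 2 * x (\<lambda>\<phi>. inner u \<phi>)" nu borel H]
    by (simp add: distr_eval_inner_unit[OF u])
  ultimately show "integrable nu (\<lambda>x. iexp (x K) * H (sqrt 2 * x (\<lambda>\<phi>. inner u \<phi>)))"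
    and "(\<integral>x. iexp (x K) * H (sqrt 2 * x (\<lambda>\<phi>. inner u \<phi>)) \<partial>nu)
      = exp (- (onorm K)\<^sup>2 / 4) * (\<integral>y. H y \<partial>std_normal_distribution)"
    using indep_var_integrable[OF indep] indep_var_lebesgue_integral[OF indep] char_Qstar[OF K(1)]
    by (simp_all add: comp_def)
qed

text \<open>Split \<open>L = K + c \<langle>u, \<cdot>\<rangle>\<close> along the unit vector \<open>u\<close> in the direction of \<open>v\<close>: the
  density depends only on the coordinate \<open>x \<langle>u, \<cdot>\<rangle>\<close>, which is \<open>N(0, 1/2)\<close> and independent of
  \<open>x K\<close>, so the integral reduces to a one-dimensional complex Gaussian integral.\<close>
lemma integral_shift_density_iexp:
  assumes v: "v \<noteq> 0" and L: "L \<in> Qstar"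
  shows "integrable nu (\<lambda>x. shift_density v x *\<^sub>R iexp (x L + L v))"
    and "(\<integral>x. shift_density v x *\<^sub>R iexp (x L + L v) \<partial>nu) = complex_of_real (exp (- (onorm L)\<^sup>2 / 4))"
proof -
  define r where "r = norm v"
  define u where "u = v /\<^sub>R r"
  define c where "c = L u"
  define K where "K = (\<lambda>\<phi>. L \<phi> + (- c) * inner u \<phi>)"
  define H where "H y = (exp (- r\<^sup>2) *\<^sub>R iexp (r * c)) * (exp (- sqrt 2 * r * y) *\<^sub>R iexp (c / sqrt 2 * y))" for y
  have r: "r > 0" and u: "norm u = 1" and v_eq: "v = r *\<^sub>R u"
    using v by (simp_all add: r_def u_def)
  have K: "K \<in> Qstar" unfolding K_def by (intro Qstar_add Qstar_cmult L Qstar_inner)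
  have "inner u u = 1" using u by (simp add: norm_eq_sqrt_inner)
  then have Ku: "K u = 0" by (simp add: K_def c_def)
  have onorm_L: "(onorm L)\<^sup>2 = (onorm K)\<^sup>2 + c\<^sup>2"
    using onorm_orthogonal_add_sq[OF Qstar_imp_bounded_linear[OF K] u Ku, of c] by (simp add: K_def)
  have pointwise: "shift_density v x *\<^sub>R iexp (x L + L v) = iexp (x K) * H (sqrt 2 * x (\<lambda>\<phi>. inner u \<phi>))"
    if "x \<in> space nu" for x
  proof -
    have "x L = x K + c * x (\<lambda>\<phi>. inner u \<phi>)"
      using Qhat_lincomb[of x K "\<lambda>\<phi>. inner u \<phi>" 1 c] that K by (simp add: space_nu K_def Qstar_inner)
    moreover have "x (\<lambda>\<phi>. inner v \<phi>) = r * x (\<lambda>\<phi>. inner u \<phi>)"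
      using Qhat_cmult[of x "\<lambda>\<phi>. inner u \<phi>" r] that by (simp add: space_nu v_eq Qstar_inner)
    moreover have "L v = r * c"
      using linear_scale[OF bounded_linear.linear[OF Qstar_imp_bounded_linear[OF L]]] by (simp add: v_eq c_def)
    ultimately show ?thesis
      unfolding shift_density_def H_def
      by (simp add: r_def scaleR_conv_of_real exp_add[symmetric] exp_diff algebra_simps flip: of_real_mult)
  qed
  have H: "integrable std_normal_distribution H" "H \<in> borel_measurable borel"
    unfolding H_def by (intro integrable_mult_right std_normal_exp_iexp(1)) measurable
  have "(\<integral>y. H y \<partial>std_normal_distribution) = (exp (- r\<^sup>2) *\<^sub>R iexp (r * c))
      * (exp ((- sqrt 2 * r)\<^sup>2 / 2 - (c / sqrt 2)\<^sup>2 / 2) *\<^sub>R iexp (c / sqrt 2 * (- sqrt 2 * r)))"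
    unfolding H_def integral_mult_right_zero std_normal_exp_iexp(2) ..
  also have "\<dots> = (exp (- r\<^sup>2) * exp (r\<^sup>2 - c\<^sup>2 / 4)) *\<^sub>R (iexp (r * c) * iexp (- (r * c)))"
    by (simp add: power_divide scaleR_conv_of_real algebra_simps)
  also have "\<dots> = complex_of_real (exp (- c\<^sup>2 / 4))"
    by (simp add: exp_add[symmetric] scaleR_conv_of_real)
  finally have integral_H: "(\<integral>y. H y \<partial>std_normal_distribution) = complex_of_real (exp (- c\<^sup>2 / 4))" .
  note product = integral_iexp_eval_mult_normal[OF u K Ku H]
  show "integrable nu (\<lambda>x. shift_density v x *\<^sub>R iexp (x L + L v))"
    by (rule Bochner_Integration.integrable_cong[THEN iffD2, OF refl pointwise product(1)])
  have "(\<integral>x. shift_density v x *\<^sub>R iexp (x L + L v) \<partial>nu)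
      = (\<integral>x. iexp (x K) * H (sqrt 2 * x (\<lambda>\<phi>. inner u \<phi>)) \<partial>nu)"
    by (rule Bochner_Integration.integral_cong[OF refl pointwise])
  then show "(\<integral>x. shift_density v x *\<^sub>R iexp (x L + L v) \<partial>nu) = complex_of_real (exp (- (onorm L)\<^sup>2 / 4))"
    unfolding product(2) integral_H onorm_L by (simp add: exp_add[symmetric] add_divide_distrib flip: of_real_mult)
qed

lemma distr_density_hat_shift: "distr (density nu (shift_density v)) nu (hat_shift v) = nu"
proof (cases "v = 0")
  case True
  have "density nu (shift_density v) = density nu (\<lambda>_. 1)"
    using True by (intro density_cong) (auto simp: shift_density_def space_nu Qhat_zero)
  moreover have "distr nu nu (hat_shift v) = distr nu nu (\<lambda>x. x)"
    using True by (intro distr_cong) (auto simp: space_nu hat_shift_zero)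
  ultimately show ?thesis by (simp add: density_1)
next
  case False
  define D where "D = density nu (shift_density v)"
  have "integrable nu (\<lambda>x. norm (shift_density v x *\<^sub>R iexp (x (\<lambda>\<phi>. 0) + 0)))"
    using integral_shift_density_iexp(1)[OF False Qstar_zero] by (rule integrable_norm)
  then have "integrable nu (shift_density v)"
    by (simp add: shift_density_def[abs_def])
  then have "(\<integral>\<^sup>+x. ennreal (shift_density v x) \<partial>nu) = ennreal (\<integral>x. shift_density v x \<partial>nu)"
    by (rule nn_integral_eq_integral) (simp add: shift_density_def)
  then have "emeasure D (space D) = ennreal (\<integral>x. shift_density v x \<partial>nu)"
    unfolding D_def by (simp add: emeasure_density nn_integral_set_ennreal[symmetric])
  then have finite_D: "finite_measure D" by (intro finite_measureI) simp
  have sets_D: "sets D = sets nu" by (simp add: D_def)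
  have [measurable]: "hat_shift v \<in> measurable D nu"
    unfolding measurable_cong_sets[OF sets_D refl] by simp
  show ?thesis
    unfolding D_def[symmetric]
  proof (rule Qhat_measure_eqI_char)
    show "sets (distr D nu (hat_shift v)) = Qhat_sets" "sets nu = Qhat_sets"
      by (simp_all add: sets_nu)
    show "finite_measure (distr D nu (hat_shift v))"
      by (rule finite_measure.finite_measure_distr[OF finite_D]) simp
    show "finite_measure nu" by unfold_locales
    fix L :: "'q \<Rightarrow> real" assume L: "L \<in> Qstar"
    have [measurable]: "(\<lambda>x. iexp (x L)) \<in> borel_measurable nu" by simp
    have "(\<integral>x. iexp (x L) \<partial>distr D nu (hat_shift v)) = (\<integral>x. iexp (hat_shift v x L) \<partial>D)"
      by (rule integral_distr) simp_all
    also have "\<dots> = (\<integral>x. shift_density v x *\<^sub>R iexp (x L + L v) \<partial>nu)"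
      unfolding D_def
      by (subst integral_density) (auto simp: shift_density_def hat_shift_apply[OF L])
    also have "\<dots> = (\<integral>x. iexp (x L) \<partial>nu)"
      using integral_shift_density_iexp(2)[OF False L] char_Qstar[OF L] by simp
    finally show "(\<integral>x. iexp (x L) \<partial>distr D nu (hat_shift v)) = (\<integral>x. iexp (x L) \<partial>nu)" .
  qed
qed

lemma nn_integral_hat_shift:
  assumes [measurable]: "f \<in> borel_measurable nu"
  shows "(\<integral>\<^sup>+x. f x \<partial>nu) = (\<integral>\<^sup>+x. ennreal (shift_density v x) * f (hat_shift v x) \<partial>nu)"
proof -
  have "(\<integral>\<^sup>+x. f x \<partial>nu) = (\<integral>\<^sup>+x. f x \<partial>distr (density nu (shift_density v)) nu (hat_shift v))"
    by (simp only: distr_density_hat_shift)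
  also have "\<dots> = (\<integral>\<^sup>+x. f (hat_shift v x) \<partial>density nu (shift_density v))"
    by (intro nn_integral_distr) simp_all
  also have "\<dots> = (\<integral>\<^sup>+x. ennreal (shift_density v x) * f (hat_shift v x) \<partial>nu)"
    by (intro nn_integral_density) simp_all
  finally show ?thesis .
qed

lemma measurable_beta_hat[measurable]: "beta_hat \<theta> br q \<Omega> diff \<eta> \<eta>' \<in> borel_measurable nu"
  unfolding beta_hat_def by measurable

lemma nn_integral_norm_sq_transf:
  assumes adm: "admissible br q \<Omega>" and [measurable]: "\<psi> \<in> borel_measurable nu"
  shows "(\<integral>\<^sup>+x. ennreal ((cmod (transf \<theta> br q \<Omega> diff \<eta> \<eta>' \<psi> x))\<^sup>2) \<partial>nu)
    = (\<integral>\<^sup>+x. ennreal ((cmod (\<psi> x))\<^sup>2) \<partial>nu)"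
proof -
  let ?v = "q (diff \<eta>' \<eta>)"
  have "(cmod (transf \<theta> br q \<Omega> diff \<eta> \<eta>' \<psi> x))\<^sup>2
      = (cmod (beta_hat \<theta> br q \<Omega> diff \<eta> \<eta>' x))\<^sup>2 * (cmod (\<psi> (hat_shift ?v x)))\<^sup>2" for x
    by (simp add: transf_def norm_mult power_mult_distrib)
  then have "(cmod (transf \<theta> br q \<Omega> diff \<eta> \<eta>' \<psi> x))\<^sup>2 = shift_density ?v x * (cmod (\<psi> (hat_shift ?v x)))\<^sup>2" for x
    unfolding norm_beta_hat_sq[OF adm] .
  then have "(\<integral>\<^sup>+x. ennreal (shift_density ?v x) * ennreal ((cmod (\<psi> (hat_shift ?v x)))\<^sup>2) \<partial>nu)
      = (\<integral>\<^sup>+x. ennreal ((cmod (transf \<theta> br q \<Omega> diff \<eta> \<eta>' \<psi> x))\<^sup>2) \<partial>nu)"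
    by (intro nn_integral_cong) (simp add: ennreal_mult'' shift_density_def)
  moreover have "(\<integral>\<^sup>+x. ennreal ((cmod (\<psi> x))\<^sup>2) \<partial>nu)
      = (\<integral>\<^sup>+x. ennreal (shift_density ?v x) * ennreal ((cmod (\<psi> (hat_shift ?v x)))\<^sup>2) \<partial>nu)"
    by (rule nn_integral_hat_shift) simp
  ultimately show ?thesis by simp
qed

lemma transf_isometry:
  assumes adm: "admissible br q \<Omega>" and \<psi>: "\<psi> \<in> L2 nu"
  shows "transf \<theta> br q \<Omega> diff \<eta> \<eta>' \<psi> \<in> L2 nu"
    and "L2norm nu (transf \<theta> br q \<Omega> diff \<eta> \<eta>' \<psi>) = L2norm nu \<psi>"
proof -
  have [measurable]: "\<psi> \<in> borel_measurable nu" using \<psi> by (simp add: L2_def)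
  have "transf \<theta> br q \<Omega> diff \<eta> \<eta>' \<psi> \<in> borel_measurable nu"
    unfolding transf_def by measurable
  moreover have "(\<integral>\<^sup>+x. ennreal ((cmod (transf \<theta> br q \<Omega> diff \<eta> \<eta>' \<psi> x))\<^sup>2) \<partial>nu)
      = (\<integral>\<^sup>+x. ennreal ((cmod (\<psi> x))\<^sup>2) \<partial>nu)"
    by (rule nn_integral_norm_sq_transf[OF adm]) simp
  ultimately show "transf \<theta> br q \<Omega> diff \<eta> \<eta>' \<psi> \<in> L2 nu"
    and "L2norm nu (transf \<theta> br q \<Omega> diff \<eta> \<eta>' \<psi>) = L2norm nu \<psi>"
    by (rule L2_and_L2norm_eq_if_nn_integral_eq[OF \<psi>])+
qed

lemma transf_surjective:
  assumes adm: "admissible br q \<Omega>" and g: "g \<in> L2 nu"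
  shows "\<exists>\<psi>\<in>L2 nu. \<forall>x\<in>space nu. transf \<theta> br q \<Omega> diff \<eta> \<eta>' \<psi> x = g x"
proof -
  let ?v = "q (diff \<eta>' \<eta>)" and ?B = "beta_hat \<theta> br q \<Omega> diff \<eta> \<eta>'"
  have [measurable]: "g \<in> borel_measurable nu" using g by (simp add: L2_def)
  define \<psi> where "\<psi> y = g (hat_shift (- ?v) y) / ?B (hat_shift (- ?v) y)" for y
  have [measurable]: "\<psi> \<in> borel_measurable nu" unfolding \<psi>_def by measurable
  have inverse: "transf \<theta> br q \<Omega> diff \<eta> \<eta>' \<psi> x = g x" if "x \<in> space nu" for x
    using that by (simp add: transf_def \<psi>_def space_nu hat_shift_neg_cancel beta_hat_nonzero)
  have "(\<integral>\<^sup>+x. ennreal ((cmod (g x))\<^sup>2) \<partial>nu) = (\<integral>\<^sup>+x. ennreal ((cmod (transf \<theta> br q \<Omega> diff \<eta> \<eta>' \<psi> x))\<^sup>2) \<partial>nu)"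
    by (intro nn_integral_cong) (simp add: inverse)
  also have "\<dots> = (\<integral>\<^sup>+x. ennreal ((cmod (\<psi> x))\<^sup>2) \<partial>nu)"
    by (rule nn_integral_norm_sq_transf[OF adm]) simp
  finally have "\<psi> \<in> L2 nu"
    by (intro L2_and_L2norm_eq_if_nn_integral_eq(1)[OF g _ sym]) measurable
  then show ?thesis
    using inverse by (intro bexI[where x=\<psi>] ballI)
qed

end

text \<open>Only the admissibility of \<open>\<Omega>\<close> (whose real part is the inner product of \<open>Q\<close>) and the
  Gaussian measure enter: \<open>\<beta>\<close> is, up to a phase, the square root of the Cameron--Martin density
  of the shift by \<open>q (\<eta>' - \<eta>)\<close>.\<close>
theorem lemma4p3:
  fixes add :: "'a \<Rightarrow> 'l::real_vector \<Rightarrow> 'a"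
    and diff :: "'a \<Rightarrow> 'a \<Rightarrow> 'l"
    and \<theta> :: "'a \<Rightarrow> 'l \<Rightarrow> real"
    and br :: "'l \<Rightarrow> 'l \<Rightarrow> real"
    and q :: "'l \<Rightarrow> 'q::{real_inner, complete_space}"
    and \<Omega> :: "'q \<Rightarrow> 'q \<Rightarrow> complex"
    and nu :: "(('q \<Rightarrow> real) \<Rightarrow> real) measure"
    and \<eta> \<eta>' :: 'a
  assumes "torsor add diff"
    and "\<forall>\<eta>. linear (\<theta> \<eta>)"
    and "bilinear br"
    and "\<forall>\<eta> \<xi> \<tau>. \<theta> (add \<eta> \<xi>) \<tau> = \<theta> \<eta> \<tau> + br \<xi> \<tau>"
    and "\<forall>\<xi>. (\<forall>\<xi>'. omega br \<xi> \<xi>' = 0) \<longrightarrow> \<xi> = 0"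
    and "Mset br \<inter> Nset br = {0}"
    and "\<forall>\<tau>. \<exists>m\<in>Mset br. \<exists>n\<in>Nset br. \<tau> = m + n"
    and "quotient_map q (Mset br)"
    and "bilinear \<Omega>"
    and "\<forall>\<phi> \<phi>'. \<Omega> \<phi> \<phi>' = \<Omega> \<phi>' \<phi>"
    and "\<forall>\<phi>. \<phi> \<noteq> 0 \<longrightarrow> Re (\<Omega> \<phi> \<phi>) > 0"
    and adm: "admissible br q \<Omega>"
    and gaussian: "gaussian_Qhat nu"
  shows "(\<forall>x\<in>Qhat. hat_shift (q (diff \<eta>' \<eta>)) x \<in> Qhat) \<and>
         (\<forall>\<psi>\<in>L2 nu. transf \<theta> br q \<Omega> diff \<eta> \<eta>' \<psi> \<in> L2 nu \<and>
                     L2norm nu (transf \<theta> br q \<Omega> diff \<eta> \<eta>' \<psi>) = L2norm nu \<psi>) \<and>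
         (\<forall>\<psi>1\<in>L2 nu. \<forall>\<psi>2\<in>L2 nu. \<forall>a::complex.
             transf \<theta> br q \<Omega> diff \<eta> \<eta>' (\<lambda>x. a * \<psi>1 x + \<psi>2 x)
             = (\<lambda>x. a * transf \<theta> br q \<Omega> diff \<eta> \<eta>' \<psi>1 x + transf \<theta> br q \<Omega> diff \<eta> \<eta>' \<psi>2 x)) \<and>
         (\<forall>g\<in>L2 nu. \<exists>\<psi>\<in>L2 nu. \<forall>x\<in>space nu. transf \<theta> br q \<Omega> diff \<eta> \<eta>' \<psi> x = g x)"
proof -
  interpret gaussian_Qhat_measure nu by (rule gaussian_Qhat_measure.intro[OF gaussian])
  have "\<forall>x\<in>Qhat. hat_shift (q (diff \<eta>' \<eta>)) x \<in> Qhat"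
    by (simp add: hat_shift_in_Qhat)
  moreover have "\<forall>\<psi>\<in>L2 nu. transf \<theta> br q \<Omega> diff \<eta> \<eta>' \<psi> \<in> L2 nu \<and>
      L2norm nu (transf \<theta> br q \<Omega> diff \<eta> \<eta>' \<psi>) = L2norm nu \<psi>"
    by (simp add: transf_isometry[OF adm])
  moreover have "transf \<theta> br q \<Omega> diff \<eta> \<eta>' (\<lambda>x. a * \<psi>1 x + \<psi>2 x)
      = (\<lambda>x. a * transf \<theta> br q \<Omega> diff \<eta> \<eta>' \<psi>1 x + transf \<theta> br q \<Omega> diff \<eta> \<eta>' \<psi>2 x)" for a \<psi>1 \<psi>2
    by (simp add: transf_def fun_eq_iff distrib_right)
  moreover have "\<forall>g\<in>L2 nu. \<exists>\<psi>\<in>L2 nu. \<forall>x\<in>space nu. transf \<theta> br q \<Omega> diff \<eta> \<eta>' \<psi> x = g x"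
    by (simp add: transf_surjective[OF adm])
  ultimately show ?thesis by simp
qed

end
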